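(* Let $\rho$ be a two-qubit state on $\mathbb C^2_A\otimes\mathbb C^2_B$. Suppose there are a unit vector $\alpha\in\mathbb C^2_A$ and a nonzero vector $\beta\in\mathbb C^2_B$ with $\rho(\alpha\otimes\beta)=0$. Let $\alpha_\perp\in\mathbb C^2_A$ be a unit vector orthogonal to $\alpha$, and define the operator on $\mathbb C^2_B$ $$M_{\alpha,\alpha_\perp}=(\bra{\alpha}\otimes I_B)\,\rho\,(\ket{\alpha_\perp}\otimes I_B).$$ If $M_{\alpha,\alpha_\perp}\beta\neq0$, then $\rho$ is two-way projectively steerable.
   Context: For a bipartite state $\rho$ on $\mathcal H_X\otimes\mathcal H_Y$, the projective assemblage from $X$ to $Y$ consists of the unnormalized conditional states $\sigma_{a|M}=\operatorname{tr}_X[(\Pi_a\otimes I_Y)\rho]$ for all projective measurements $M=\{\Pi_a\}$ on $\mathcal H_X$. It admits a local hidden state (LHS) model if there exist a probability space $(\Lambda,\mu)$, density matrices $\tau_\lambda$ on $\mathcal H_Y$ (measurable in $\lambda$) and response functions $p(a|M,\lambda)\ge0$ with $\sum_a p(a|M,\lambda)=1$ such that $\sigma_{a|M}=\int_\Lambda p(a|M,\lambda)\tau_\lambda\,d\mu(\lambda)$ for all $M$ and $a$. The state is projectively steerable from $X$ to $Y$ if no such model exists. A two-qubit state is two-way projectively steerable if it is projectively steerable both from $A$ to $B$ and from $B$ to $A$. *)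

theory Defs
  imports "HOL-Probability.Probability" "Jordan_Normal_Form.Matrix"
begin

text \<open>Finite-dimensional operators/vectors are Jordan_Normal_Form complex matrices/vectors.
  The composite space C^dA (x) C^dB uses the basis ordering |i>|j> at index i*dB+j.\<close>

definition tensor_mat :: "complex mat \<Rightarrow> complex mat \<Rightarrow> complex mat" where
  "tensor_mat A B = mat (dim_row A * dim_row B) (dim_col A * dim_col B)
     (\<lambda>(i,j). A $$ (i div dim_row B, j div dim_col B) * B $$ (i mod dim_row B, j mod dim_col B))"

definition tensor_vec :: "complex vec \<Rightarrow> complex vec \<Rightarrow> complex vec" where
  "tensor_vec v w = vec (dim_vec v * dim_vec w) (\<lambda>i. v $ (i div dim_vec w) * w $ (i mod dim_vec w))"

definition ket :: "complex vec \<Rightarrow> complex mat" where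
  "ket v = mat (dim_vec v) 1 (\<lambda>(i,j). v $ i)"

definition bra :: "complex vec \<Rightarrow> complex mat" where
  "bra v = mat 1 (dim_vec v) (\<lambda>(i,j). cnj (v $ j))"

definition ptrace_fst :: "nat \<Rightarrow> nat \<Rightarrow> complex mat \<Rightarrow> complex mat" where
  "ptrace_fst dA dB X = mat dB dB (\<lambda>(j,k). \<Sum>i<dA. X $$ (i*dB + j, i*dB + k))"

definition ptrace_snd :: "nat \<Rightarrow> nat \<Rightarrow> complex mat \<Rightarrow> complex mat" where
  "ptrace_snd dA dB X = mat dA dA (\<lambda>(i,k). \<Sum>j<dB. X $$ (i*dB + j, k*dB + j))"

definition mat_trace :: "complex mat \<Rightarrow> complex" where
  "mat_trace A = (\<Sum>i<dim_row A. A $$ (i,i))"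

definition hermitian_mat :: "nat \<Rightarrow> complex mat \<Rightarrow> bool" where
  "hermitian_mat n A \<longleftrightarrow> A \<in> carrier_mat n n \<and> (\<forall>i<n. \<forall>j<n. A $$ (i,j) = cnj (A $$ (j,i)))"

definition psd_mat :: "nat \<Rightarrow> complex mat \<Rightarrow> bool" where
  "psd_mat n A \<longleftrightarrow> hermitian_mat n A \<and> (\<forall>v\<in>carrier_vec n. Re (v \<bullet>c (A *\<^sub>v v)) \<ge> 0)"

definition density_mat :: "nat \<Rightarrow> complex mat \<Rightarrow> bool" where
  "density_mat n A \<longleftrightarrow> psd_mat n A \<and> mat_trace A = 1"

definition proj_meas :: "nat \<Rightarrow> complex mat list \<Rightarrow> bool" where
  "proj_meas d M \<longleftrightarrow>
     (\<forall>a<length M. hermitian_mat d (M ! a) \<and> M ! a * M ! a = M ! a) \<and>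
     (\<forall>i<d. \<forall>j<d. (\<Sum>a<length M. (M ! a) $$ (i,j)) = (if i = j then 1 else 0))"

definition assemblage_AB :: "complex mat \<Rightarrow> complex mat list \<Rightarrow> nat \<Rightarrow> complex mat" where
  "assemblage_AB \<rho> M a = ptrace_fst 2 2 (tensor_mat (M ! a) (1\<^sub>m 2) * \<rho>)"

definition assemblage_BA :: "complex mat \<Rightarrow> complex mat list \<Rightarrow> nat \<Rightarrow> complex mat" where
  "assemblage_BA \<rho> M a = ptrace_snd 2 2 (tensor_mat (1\<^sub>m 2) (M ! a) * \<rho>)"

definition LHS_model :: "nat \<Rightarrow> nat \<Rightarrow> (complex mat list \<Rightarrow> nat \<Rightarrow> complex mat) \<Rightarrow>
    'l measure \<Rightarrow> ('l \<Rightarrow> complex mat) \<Rightarrow> (complex mat list \<Rightarrow> nat \<Rightarrow> 'l \<Rightarrow> real) \<Rightarrow> bool" where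
  "LHS_model dX dY \<sigma> \<mu> \<tau> p \<longleftrightarrow>
     prob_space \<mu> \<and>
     (\<forall>l\<in>space \<mu>. density_mat dY (\<tau> l)) \<and>
     (\<forall>i<dY. \<forall>j<dY. (\<lambda>l. \<tau> l $$ (i,j)) \<in> borel_measurable \<mu>) \<and>
     (\<forall>M. proj_meas dX M \<longrightarrow>
        (\<forall>l\<in>space \<mu>. (\<forall>a<length M. p M a l \<ge> 0) \<and> (\<Sum>a<length M. p M a l) = 1) \<and>
        (\<forall>a<length M. \<forall>i<dY. \<forall>j<dY.
           integrable \<mu> (\<lambda>l. complex_of_real (p M a l) * \<tau> l $$ (i,j)) \<and>
           \<sigma> M a $$ (i,j) = (\<integral>l. complex_of_real (p M a l) * \<tau> l $$ (i,j) \<partial>\<mu>)))"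

text \<open>Projective steerability: no LHS model over any probability space on the type 'l
  (the theorem quantifies over all types 'l).\<close>
definition proj_steerable_AB :: "'l itself \<Rightarrow> complex mat \<Rightarrow> bool" where
  "proj_steerable_AB _ \<rho> \<longleftrightarrow>
     \<not> (\<exists>(\<mu>::'l measure) \<tau> p. LHS_model 2 2 (assemblage_AB \<rho>) \<mu> \<tau> p)"

definition proj_steerable_BA :: "'l itself \<Rightarrow> complex mat \<Rightarrow> bool" where
  "proj_steerable_BA _ \<rho> \<longleftrightarrow>
     \<not> (\<exists>(\<mu>::'l measure) \<tau> p. LHS_model 2 2 (assemblage_BA \<rho>) \<mu> \<tau> p)"

definition two_way_proj_steerable :: "'l itself \<Rightarrow> complex mat \<Rightarrow> bool" where
  "two_way_proj_steerable L \<rho> \<longleftrightarrow> proj_steerable_AB L \<rho> \<and> proj_steerable_BA L \<rho>"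

end

theory Submission
  imports Defs
begin

text \<open>
  Let u = sqrt (1 - s^2) alpha + s alpha_perp and let sigma_s be the assemblage element of the
  projector onto u. As rho (alpha (x) beta) = 0, the diagonal entry <beta|sigma_s|beta> equals
  s^2 <alpha_perp beta|rho|alpha_perp beta> and is of second order in s, whereas for a vector beta'
  orthogonal to beta the coherence <beta'|sigma_s|beta> = s (sqrt (1 - s^2) K + s L) is of first
  order, because K = <alpha beta'|rho|alpha_perp beta> is nonzero exactly when M beta is.
  In an LHS model sigma_s is the integral of p_s tau, and positivity of each tau bounds its
  coherence by a constant times sqrt T, where T = <beta|tau|beta>. But a response p_s with
  integral of p_s T of order s^2 has integral of p_s sqrt T of order o(s): above a small level
  delta use sqrt T <= T / sqrt delta, and below it use the AM-GM inequality together with the fact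
  that the measure of {0 < T < delta} tends to 0. So there is no LHS model from A to B.
  Exchanging the parties, with the orthonormal basis beta / |beta|, beta' measured on B and the
  vectors alpha, alpha_perp on A, excludes LHS models from B to A.
\<close>

section \<open>Sesquilinear forms of positive matrices\<close>

text \<open>Vectors are coordinate functions of type nat \<Rightarrow> complex, of which only the first n
  values matter; this keeps linear combinations free of carrier side conditions.\<close>

definition sesq :: "nat \<Rightarrow> (nat \<Rightarrow> complex) \<Rightarrow> complex mat \<Rightarrow> (nat \<Rightarrow> complex) \<Rightarrow> complex" where
  "sesq n f R g = (\<Sum>a<n. \<Sum>b<n. cnj (f a) * R $$ (a,b) * g b)"

lemma sesq_linear_left:
  "sesq n (\<lambda>a. c * f1 a + d * f2 a) R g = cnj c * sesq n f1 R g + cnj d * sesq n f2 R g"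
  unfolding sesq_def by (simp add: sum_distrib_left sum.distrib algebra_simps)

lemma sesq_linear_right:
  "sesq n f R (\<lambda>b. c * g1 b + d * g2 b) = c * sesq n f R g1 + d * sesq n f R g2"
  unfolding sesq_def by (simp add: sum_distrib_left sum.distrib algebra_simps)

lemma sesq_scale_right: "sesq n f R (\<lambda>b. c * g b) = c * sesq n f R g"
  using sesq_linear_right[of n f R c g 0 g] by simp

lemma sesq_kernel_right:
  assumes "R \<in> carrier_mat n n" "R *\<^sub>v vec n g = 0\<^sub>v n"
  shows "sesq n f R g = 0"
proof -
  have "sesq n f R g = (\<Sum>a<n. cnj (f a) * (\<Sum>b<n. R $$ (a,b) * g b))"
    by (simp add: sesq_def sum_distrib_left mult.assoc)
  also have "\<dots> = (\<Sum>a<n. cnj (f a) * (R *\<^sub>v vec n g) $ a)"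
    using assms(1) by (simp add: scalar_prod_def atLeast0LessThan)
  finally show ?thesis using assms(2) by simp
qed

lemma mult_mat_vec_scale_kernel:
  fixes A :: "'a :: field mat"
  assumes "A \<in> carrier_mat n n" "A *\<^sub>v vec n g = 0\<^sub>v n"
  shows "A *\<^sub>v vec n (\<lambda>i. c * g i) = 0\<^sub>v n"
proof -
  have "vec n (\<lambda>i. c * g i) = c \<cdot>\<^sub>v vec n g" by (rule eq_vecI) simp_all
  then have "A *\<^sub>v vec n (\<lambda>i. c * g i) = c \<cdot>\<^sub>v (A *\<^sub>v vec n g)"
    using assms(1) by (simp add: mult_mat_vec)
  also have "\<dots> = 0\<^sub>v n" unfolding assms(2) by (intro eq_vecI) auto
  finally show ?thesis .
qed

lemma sesq_hermitian:
  assumes "hermitian_mat n A"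
  shows "sesq n f A g = cnj (sesq n g A f)"
proof -
  have A: "\<And>i j. i < n \<Longrightarrow> j < n \<Longrightarrow> cnj (A $$ (j,i)) = A $$ (i,j)"
    using assms unfolding hermitian_mat_def by (metis complex_cnj_cnj)
  have "cnj (sesq n g A f) = (\<Sum>a<n. \<Sum>b<n. cnj (f b) * A $$ (b,a) * g a)"
    unfolding sesq_def by (auto simp: A intro!: sum.cong)
  also have "\<dots> = sesq n f A g"
    unfolding sesq_def by (rule sum.swap)
  finally show ?thesis by simp
qed

lemma sesq_kernel_left:
  assumes "hermitian_mat n A" "A *\<^sub>v vec n f = 0\<^sub>v n"
  shows "sesq n f A g = 0"
  using assms sesq_kernel_right[of A n f g] sesq_hermitian[OF assms(1), of f g]
  by (simp add: hermitian_mat_def)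

lemma sesq_kernel_perturbation:
  fixes c s :: real and z0 z1 w0 w1 :: "nat \<Rightarrow> complex"
  assumes "hermitian_mat n A" "A *\<^sub>v vec n z0 = 0\<^sub>v n"
  shows "sesq n (\<lambda>i. c * z0 i + s * z1 i) A (\<lambda>i. c * z0 i + s * z1 i) = s\<^sup>2 * sesq n z1 A z1"
    and "sesq n (\<lambda>i. c * w0 i + s * w1 i) A (\<lambda>i. c * z0 i + s * z1 i)
           = s * (c * sesq n w0 A z1 + s * sesq n w1 A z1)"
proof -
  have A: "A \<in> carrier_mat n n" using assms(1) by (simp add: hermitian_mat_def)
  have right: "sesq n f A (\<lambda>i. c * z0 i + s * z1 i) = s * sesq n f A z1" for f
    using sesq_kernel_right[OF A assms(2)] by (simp add: sesq_linear_right)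
  have "sesq n z0 A z1 = 0" by (rule sesq_kernel_left[OF assms])
  then show "sesq n (\<lambda>i. c * z0 i + s * z1 i) A (\<lambda>i. c * z0 i + s * z1 i) = s\<^sup>2 * sesq n z1 A z1"
    by (simp add: right sesq_linear_left power2_eq_square)
  show "sesq n (\<lambda>i. c * w0 i + s * w1 i) A (\<lambda>i. c * z0 i + s * z1 i)
           = s * (c * sesq n w0 A z1 + s * sesq n w1 A z1)"
    by (simp add: right sesq_linear_left algebra_simps)
qed

lemma sesq_psd_nonneg:
  assumes "psd_mat n A"
  shows "Re (sesq n f A f) \<ge> 0"
proof -
  have A: "A \<in> carrier_mat n n" using assms by (simp add: psd_mat_def hermitian_mat_def)
  have "vec n f \<bullet>c (A *\<^sub>v vec n f) = cnj (sesq n f A f)"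
    using A by (simp add: sesq_def scalar_prod_def atLeast0LessThan sum_distrib_left algebra_simps)
  moreover have "Re (vec n f \<bullet>c (A *\<^sub>v vec n f)) \<ge> 0"
    using assms by (simp add: psd_mat_def)
  ultimately show ?thesis by simp
qed

lemma cmod_sq_le_of_quadratic_nonneg:
  fixes Qx Qy :: real and w :: complex
  assumes all: "\<And>z. 0 \<le> Qx + 2 * Re (cnj z * w) + (cmod z)\<^sup>2 * Qy"
    and Qx: "Qx \<ge> 0" and Qy: "Qy \<ge> 0"
  shows "(cmod w)\<^sup>2 \<le> Qx * Qy"
proof -
  have wc: "cnj w * w = of_real ((cmod w)\<^sup>2)"
    by (metis complex_norm_square mult.commute of_real_power)
  show ?thesis
  proof (cases "Qy > 0")
    case True
    have "0 \<le> Qx + 2 * Re (cnj (- w / Qy) * w) + (cmod (- w / Qy))\<^sup>2 * Qy" by (rule all)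
    also have "\<dots> = Qx - (cmod w)\<^sup>2 / Qy"
      using True wc by (simp add: norm_divide power2_eq_square field_simps)
    finally show ?thesis using True by (simp add: field_simps)
  next
    case False
    then have "Qy = 0" using Qy by simp
    show ?thesis
    proof (rule ccontr)
      assume "\<not> ?thesis"
      then have w: "(cmod w)\<^sup>2 > 0" using Qx Qy by (smt (verit) zero_le_mult_iff)
      define t where "t = (Qx + 1) / (2 * (cmod w)\<^sup>2)"
      have "0 \<le> Qx + 2 * Re (cnj (- of_real t * w) * w) + (cmod (- of_real t * w))\<^sup>2 * Qy"
        by (rule all)
      also have "\<dots> = Qx - 2 * t * Re (cnj w * w)"
        using \<open>Qy = 0\<close> by (simp add: algebra_simps)
      also have "\<dots> = Qx - 2 * t * (cmod w)\<^sup>2"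
        unfolding wc by simp
      also have "\<dots> = -1" using w by (simp add: t_def field_simps)
      finally show False by simp
    qed
  qed
qed

lemma sesq_psd_Cauchy_Schwarz:
  assumes "psd_mat n A"
  shows "(cmod (sesq n y A x))\<^sup>2 \<le> Re (sesq n x A x) * Re (sesq n y A y)"
proof (rule cmod_sq_le_of_quadratic_nonneg)
  have herm: "hermitian_mat n A" using assms by (simp add: psd_mat_def)
  fix z :: complex
  have left: "sesq n (\<lambda>i. x i + z * y i) A g = sesq n x A g + cnj z * sesq n y A g" for g
    using sesq_linear_left[of n 1 x z y A g] by simp
  have right: "sesq n f A (\<lambda>i. x i + z * y i) = sesq n f A x + z * sesq n f A y" for f
    using sesq_linear_right[of n f A 1 x z y] by simp
  have "Re (sesq n (\<lambda>i. x i + z * y i) A (\<lambda>i. x i + z * y i)) \<ge> 0"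
    by (rule sesq_psd_nonneg[OF assms])
  moreover have "sesq n (\<lambda>i. x i + z * y i) A (\<lambda>i. x i + z * y i) =
     sesq n x A x + z * cnj (sesq n y A x) + cnj z * sesq n y A x + z * cnj z * sesq n y A y"
    using sesq_hermitian[OF herm, of x y] by (simp add: left right algebra_simps)
  moreover have "Re (z * cnj z * sesq n y A y) = (cmod z)\<^sup>2 * Re (sesq n y A y)"
    by (simp add: complex_norm_square[symmetric])
  moreover have "Re (z * cnj (sesq n y A x)) = Re (cnj z * sesq n y A x)"
    by simp
  ultimately show "0 \<le> Re (sesq n x A x) + 2 * Re (cnj z * sesq n y A x) + (cmod z)\<^sup>2 * Re (sesq n y A y)"
    by (simp add: cmod_power2 power2_eq_square algebra_simps)
qed (use sesq_psd_nonneg[OF assms] in auto)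

lemma sesq_unit_vectors:
  assumes "i < n" "j < n"
  shows "sesq n (\<lambda>k. if k = i then 1 else 0) A (\<lambda>k. if k = j then 1 else 0) = A $$ (i,j)"
proof -
  have delta: "(x::complex) * (if P then 1 else 0) = (if P then x else 0)" for x P
    by simp
  have "(\<Sum>b<n. cnj (if a = i then 1 else 0) * A $$ (a,b) * (if b = j then 1 else 0))
      = (if a = i then A $$ (a,j) else 0)" for a
    using assms(2) by (cases "a = i") (simp_all add: delta)
  then show ?thesis using assms(1) by (simp add: sesq_def)
qed

lemma density_mat_entry_bound:
  assumes "density_mat n A" "i < n" "j < n"
  shows "cmod (A $$ (i,j)) \<le> 1"
proof -
  have psd: "psd_mat n A" and tr: "mat_trace A = 1" using assms(1) by (auto simp: density_mat_def)
  have dim: "dim_row A = n" using psd by (auto simp: psd_mat_def hermitian_mat_def)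
  define e where "e k = (\<lambda>i::nat. if i = k then (1::complex) else 0)" for k
  have nonneg: "0 \<le> Re (A $$ (k,k))" if "k < n" for k
    using sesq_psd_nonneg[OF psd, of "e k"] sesq_unit_vectors[OF that that] by (simp add: e_def)
  have le1: "Re (A $$ (k,k)) \<le> 1" if "k < n" for k
  proof -
    have "Re (A $$ (k,k)) \<le> (\<Sum>k<n. Re (A $$ (k,k)))"
      using that nonneg by (intro member_le_sum) auto
    also have "\<dots> = 1"
      using arg_cong[OF tr, of Re] dim by (simp add: mat_trace_def)
    finally show ?thesis .
  qed
  have "(cmod (A $$ (i,j)))\<^sup>2 \<le> Re (A $$ (j,j)) * Re (A $$ (i,i))"
    using sesq_psd_Cauchy_Schwarz[OF psd, of "e i" "e j"] sesq_unit_vectors assms(2,3)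
    by (simp add: e_def)
  also have "\<dots> \<le> 1 * 1"
    using nonneg le1 assms(2,3) by (intro mult_mono) auto
  finally show ?thesis by (simp add: power_le_one_iff abs_le_iff)
qed

lemma density_mat_sesq_bound:
  assumes "density_mat n A"
  shows "Re (sesq n y A y) \<le> (\<Sum>i<n. cmod (y i))\<^sup>2"
proof -
  have "Re (sesq n y A y) \<le> cmod (sesq n y A y)" by (rule complex_Re_le_cmod)
  also have "\<dots> \<le> (\<Sum>a<n. \<Sum>b<n. cmod (cnj (y a) * A $$ (a,b) * y b))"
    unfolding sesq_def by (rule order_trans[OF norm_sum sum_mono]) (rule norm_sum)
  also have "\<dots> \<le> (\<Sum>a<n. \<Sum>b<n. cmod (y a) * cmod (y b))"
  proof (intro sum_mono)
    fix a b assume "a \<in> {..<n}" "b \<in> {..<n}"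
    then have "cmod (y a) * cmod (A $$ (a,b)) * cmod (y b) \<le> cmod (y a) * 1 * cmod (y b)"
      using density_mat_entry_bound[OF assms] by (intro mult_right_mono mult_left_mono) auto
    then show "cmod (cnj (y a) * A $$ (a,b) * y b) \<le> cmod (y a) * cmod (y b)"
      by (simp add: norm_mult)
  qed
  also have "\<dots> = (\<Sum>i<n. cmod (y i))\<^sup>2"
    by (simp add: power2_eq_square sum_product)
  finally show ?thesis .
qed

lemma density_mat_sesq_Cauchy_Schwarz:
  assumes "density_mat n A"
  shows "(cmod (sesq n y A x))\<^sup>2 \<le> (\<Sum>i<n. cmod (y i))\<^sup>2 * Re (sesq n x A x)"
proof -
  have psd: "psd_mat n A" using assms by (simp add: density_mat_def)
  have "(cmod (sesq n y A x))\<^sup>2 \<le> Re (sesq n x A x) * Re (sesq n y A y)"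
    by (rule sesq_psd_Cauchy_Schwarz[OF psd])
  also have "\<dots> \<le> Re (sesq n x A x) * (\<Sum>i<n. cmod (y i))\<^sup>2"
    using sesq_psd_nonneg[OF psd] density_mat_sesq_bound[OF assms] by (intro mult_left_mono)
  finally show ?thesis by (simp add: mult.commute)
qed

section \<open>Vectors, measurements and assemblages of two qubits\<close>

lemma sum_lessThan_two: "(\<Sum>i<2::nat. f i) = f 0 + f 1"
  by (simp add: eval_nat_numeral)

lemma sum_lessThan_four: "(\<Sum>i<4::nat. f i) = f 0 + f 1 + f 2 + f 3"
  by (simp add: eval_nat_numeral)

lemma sum_atLeastLessThan_two: "(\<Sum>i = 0..<2::nat. f i) = f 0 + f 1"
  by (simp add: eval_nat_numeral)

lemma sum_atLeastLessThan_four: "(\<Sum>i = 0..<4::nat. f i) = f 0 + f 1 + f 2 + f 3"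
  by (simp add: eval_nat_numeral)

definition rank1_proj :: "nat \<Rightarrow> (nat \<Rightarrow> complex) \<Rightarrow> complex mat" where
  "rank1_proj n u = mat n n (\<lambda>(i,j). u i * cnj (u j))"

definition rank1_meas :: "nat \<Rightarrow> (nat \<Rightarrow> complex) \<Rightarrow> complex mat list" where
  "rank1_meas n u = [rank1_proj n u, 1\<^sub>m n - rank1_proj n u]"

lemma unit_combination:
  fixes c s :: complex
  assumes "(\<Sum>i<n. f i * cnj (f i)) = 1" "(\<Sum>i<n. g i * cnj (g i)) = 1"
    and "(\<Sum>i<n. f i * cnj (g i)) = 0" and "c * cnj c + s * cnj s = 1"
  shows "(\<Sum>i<n. (c * f i + s * g i) * cnj (c * f i + s * g i)) = 1"
proof -
  have "(\<Sum>i<n. (c * f i + s * g i) * cnj (c * f i + s * g i))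
      = c * cnj c * (\<Sum>i<n. f i * cnj (f i)) + s * cnj s * (\<Sum>i<n. g i * cnj (g i))
        + c * cnj s * (\<Sum>i<n. f i * cnj (g i)) + s * cnj c * cnj (\<Sum>i<n. f i * cnj (g i))"
    by (simp add: sum.distrib sum_distrib_left algebra_simps)
  then show ?thesis using assms by simp
qed

lemma unit_coefficients_sqrt:
  fixes s :: real
  assumes "0 < s" "s < 1"
  shows "of_real (sqrt (1 - s\<^sup>2)) * cnj (of_real (sqrt (1 - s\<^sup>2))) + of_real s * cnj (of_real s) = (1::complex)"
proof -
  have "s\<^sup>2 \<le> 1" using assms by (simp add: power_le_one)
  then have "sqrt (1 - s\<^sup>2) * sqrt (1 - s\<^sup>2) + s * s = 1" by (simp add: power2_eq_square)
  then show ?thesis by (simp flip: of_real_mult of_real_add)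
qed

lemma proj_meas_rank1_meas:
  assumes u: "(\<Sum>i<n. u i * cnj (u i)) = 1"
  shows "proj_meas n (rank1_meas n u)"
proof -
  define P where "P = rank1_proj n u"
  have P: "P \<in> carrier_mat n n" by (simp add: P_def rank1_proj_def)
  have herm: "hermitian_mat n P" "hermitian_mat n (1\<^sub>m n - P)"
    using P by (auto simp: hermitian_mat_def P_def rank1_proj_def)
  have PP: "P * P = P"
  proof (rule eq_matI)
    fix i j assume "i < dim_row P" "j < dim_col P"
    then have "i < n" "j < n" using P by auto
    then have "(P * P) $$ (i,j) = u i * cnj (u j) * (\<Sum>k<n. u k * cnj (u k))"
      by (simp add: P_def rank1_proj_def scalar_prod_def atLeast0LessThan sum_distrib_left algebra_simps)
    then show "(P * P) $$ (i,j) = P $$ (i,j)"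
      using u \<open>i < n\<close> \<open>j < n\<close> by (simp add: P_def rank1_proj_def)
  qed auto
  have "(1\<^sub>m n - P) * (1\<^sub>m n - P) = 1\<^sub>m n * (1\<^sub>m n - P) - P * (1\<^sub>m n - P)"
    using P by (intro minus_mult_distrib_mat) auto
  also have "\<dots> = (1\<^sub>m n - P) - (P - P * P)"
    using P by (simp add: mult_minus_distrib_mat[OF P one_carrier_mat P])
  also have "\<dots> = 1\<^sub>m n - P"
    using P by (intro eq_matI) (auto simp: PP)
  finally have QQ: "(1\<^sub>m n - P) * (1\<^sub>m n - P) = 1\<^sub>m n - P" .
  show ?thesis
    using herm PP QQ P unfolding proj_meas_def rank1_meas_def P_def[symmetric]
    by (auto simp: less_Suc_eq numeral_2_eq_2)
qed

definition tensor_fun :: "(nat \<Rightarrow> complex) \<Rightarrow> (nat \<Rightarrow> complex) \<Rightarrow> nat \<Rightarrow> complex" where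
  "tensor_fun f g i = f (i div 2) * g (i mod 2)"

lemma tensor_fun_linear_left:
  "tensor_fun (\<lambda>i. c * f1 i + d * f2 i) g = (\<lambda>k. c * tensor_fun f1 g k + d * tensor_fun f2 g k)"
  by (simp add: tensor_fun_def fun_eq_iff algebra_simps)

lemma tensor_fun_linear_right:
  "tensor_fun f (\<lambda>i. c * g1 i + d * g2 i) = (\<lambda>k. c * tensor_fun f g1 k + d * tensor_fun f g2 k)"
  by (simp add: tensor_fun_def fun_eq_iff algebra_simps)

lemma tensor_fun_scale_right: "tensor_fun f (\<lambda>i. c * g i) = (\<lambda>k. c * tensor_fun f g k)"
  by (simp add: tensor_fun_def fun_eq_iff algebra_simps)

lemma tensor_vec_eq_vec_tensor_fun:
  assumes "v \<in> carrier_vec 2" "w \<in> carrier_vec 2"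
  shows "tensor_vec v w = vec 4 (tensor_fun (($) v) (($) w))"
  using assms by (simp add: tensor_vec_def tensor_fun_def[abs_def])

lemma orthonormal_vec_coords:
  fixes v w :: "complex vec"
  assumes "v \<in> carrier_vec n" "w \<in> carrier_vec n" "v \<bullet>c v = 1" "w \<bullet>c w = 1" "w \<bullet>c v = 0"
  shows "(\<Sum>i<n. v $ i * cnj (v $ i)) = 1" "(\<Sum>i<n. w $ i * cnj (w $ i)) = 1"
    and "(\<Sum>i<n. v $ i * cnj (w $ i)) = 0"
proof -
  have "(\<Sum>i<n. v $ i * cnj (w $ i)) = cnj (w \<bullet>c v)"
    using assms(1,2) by (simp add: scalar_prod_def atLeast0LessThan mult.commute)
  then show "(\<Sum>i<n. v $ i * cnj (w $ i)) = 0" using assms(5) by simp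
  show "(\<Sum>i<n. v $ i * cnj (v $ i)) = 1" "(\<Sum>i<n. w $ i * cnj (w $ i)) = 1"
    using assms(1-4) by (simp_all add: scalar_prod_def atLeast0LessThan)
qed

lemma qubit_orthonormal_basis:
  fixes \<beta> :: "complex vec"
  assumes "\<beta> \<in> carrier_vec 2" "\<beta> \<noteq> 0\<^sub>v 2"
  obtains r b1 b2 where "r \<noteq> 0" "b1 = (\<lambda>i. r * \<beta> $ i)"
    "(\<Sum>i<2. b1 i * cnj (b1 i)) = 1" "(\<Sum>i<2. b2 i * cnj (b2 i)) = 1" "(\<Sum>i<2. b1 i * cnj (b2 i)) = 0"
    "\<And>i j. i < 2 \<Longrightarrow> j < 2 \<Longrightarrow> cnj (b1 j) * b1 i + cnj (b2 j) * b2 i = (if i = j then 1 else 0)"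
proof -
  have "\<beta> $ 0 \<noteq> 0 \<or> \<beta> $ 1 \<noteq> 0"
  proof (rule ccontr)
    assume "\<not> (\<beta> $ 0 \<noteq> 0 \<or> \<beta> $ 1 \<noteq> 0)"
    then have "\<beta> = 0\<^sub>v 2"
      using assms(1) by (intro eq_vecI) (auto simp: less_Suc_eq numeral_2_eq_2)
    then show False using assms(2) by simp
  qed
  define X where "X = (cmod (\<beta> $ 0))\<^sup>2 + (cmod (\<beta> $ 1))\<^sup>2"
  define r where "r = complex_of_real (sqrt X)"
  have X: "X > 0"
    using \<open>\<beta> $ 0 \<noteq> 0 \<or> \<beta> $ 1 \<noteq> 0\<close> by (auto simp: X_def add_pos_nonneg add_nonneg_pos)
  have "\<beta> $ 0 * cnj (\<beta> $ 0) + \<beta> $ 1 * cnj (\<beta> $ 1) = of_real X"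
    unfolding X_def by (simp only: of_real_add complex_norm_square)
  also have "\<dots> = r * r" using X by (simp add: r_def flip: of_real_mult)
  finally have rr: "\<beta> $ 0 * cnj (\<beta> $ 0) + \<beta> $ 1 * cnj (\<beta> $ 1) = r * r" .
  have r: "r \<noteq> 0" "cnj r = r" using X by (simp_all add: r_def)
  define b1 where "b1 i = \<beta> $ i / r" for i
  define b2 where "b2 i = (if i = 0 then - cnj (\<beta> $ 1) else cnj (\<beta> $ 0)) / r" for i :: nat
  have "b1 = (\<lambda>i. inverse r * \<beta> $ i)" by (simp add: b1_def fun_eq_iff field_simps)
  moreover have "(\<Sum>i<2. b1 i * cnj (b1 i)) = 1" "(\<Sum>i<2. b2 i * cnj (b2 i)) = 1"
      "(\<Sum>i<2. b1 i * cnj (b2 i)) = 0"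
    using r rr by (simp_all add: b1_def b2_def sum_lessThan_two field_simps)
  moreover have "cnj (b1 j) * b1 i + cnj (b2 j) * b2 i = (if i = j then 1 else 0)"
    if "i < 2" "j < 2" for i j
    using that r rr by (auto simp: b1_def b2_def less_Suc_eq numeral_2_eq_2 field_simps)
  ultimately show ?thesis using that[of "inverse r"] r(1) by simp
qed

lemma sesq_assemblage_AB:
  assumes "\<rho> \<in> carrier_mat 4 4"
  shows "sesq 2 y (assemblage_AB \<rho> (rank1_meas 2 u) 0) x = sesq 4 (tensor_fun u y) \<rho> (tensor_fun u x)"
  using assms
  by (simp add: assemblage_AB_def rank1_meas_def rank1_proj_def ptrace_fst_def tensor_mat_def
      sesq_def tensor_fun_def sum_lessThan_two sum_lessThan_four sum_atLeastLessThan_two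
      sum_atLeastLessThan_four scalar_prod_def algebra_simps)
    (simp add: numeral_2_eq_2 numeral_3_eq_3 algebra_simps)

lemma sesq_assemblage_BA:
  assumes "\<rho> \<in> carrier_mat 4 4"
  shows "sesq 2 y (assemblage_BA \<rho> (rank1_meas 2 v) 0) x = sesq 4 (tensor_fun y v) \<rho> (tensor_fun x v)"
  using assms
  by (simp add: assemblage_BA_def rank1_meas_def rank1_proj_def ptrace_snd_def tensor_mat_def
      sesq_def tensor_fun_def sum_lessThan_two sum_lessThan_four sum_atLeastLessThan_two
      sum_atLeastLessThan_four scalar_prod_def algebra_simps)
    (simp add: numeral_2_eq_2 numeral_3_eq_3 algebra_simps)

lemma partial_matrix_element_apply:
  assumes "\<alpha> \<in> carrier_vec 2" "\<alpha>' \<in> carrier_vec 2" "\<beta> \<in> carrier_vec 2" "\<rho> \<in> carrier_mat 4 4" "j < 2"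
  shows "((tensor_mat (bra \<alpha>) (1\<^sub>m 2) * \<rho> * tensor_mat (ket \<alpha>') (1\<^sub>m 2)) *\<^sub>v \<beta>) $ j
     = sesq 4 (tensor_fun (($) \<alpha>) (\<lambda>i. if i = j then 1 else 0)) \<rho> (tensor_fun (($) \<alpha>') (($) \<beta>))"
proof -
  have "j = 0 \<or> j = 1" using assms(5) by auto
  then show ?thesis
    using assms(1-4)
    by (elim disjE) (simp_all add: sesq_def tensor_fun_def tensor_mat_def bra_def ket_def
        sum_lessThan_two sum_lessThan_four sum_atLeastLessThan_two sum_atLeastLessThan_four
        scalar_prod_def algebra_simps)
qed

lemma partial_matrix_element_nonzero:
  assumes "\<alpha> \<in> carrier_vec 2" "\<alpha>' \<in> carrier_vec 2" "\<beta> \<in> carrier_vec 2" "\<rho> \<in> carrier_mat 4 4"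
    and "(tensor_mat (bra \<alpha>) (1\<^sub>m 2) * \<rho> * tensor_mat (ket \<alpha>') (1\<^sub>m 2)) *\<^sub>v \<beta> \<noteq> 0\<^sub>v 2"
  obtains j where "j < 2"
    "sesq 4 (tensor_fun (($) \<alpha>) (\<lambda>i. if i = j then 1 else 0)) \<rho> (tensor_fun (($) \<alpha>') (($) \<beta>)) \<noteq> 0"
proof -
  have "dim_vec ((tensor_mat (bra \<alpha>) (1\<^sub>m 2) * \<rho> * tensor_mat (ket \<alpha>') (1\<^sub>m 2)) *\<^sub>v \<beta>) = 2"
    using assms(1) by (simp add: tensor_mat_def bra_def)
  then obtain j where "j < 2" "((tensor_mat (bra \<alpha>) (1\<^sub>m 2) * \<rho> * tensor_mat (ket \<alpha>') (1\<^sub>m 2)) *\<^sub>v \<beta>) $ j \<noteq> 0"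
    using assms(5) by (metis eq_vecI index_zero_vec(1,2))
  then show ?thesis using that partial_matrix_element_apply[OF assms(1-4)] by metis
qed

lemma sesq_basis_complement_nonzero:
  assumes herm: "hermitian_mat 4 \<rho>" and kernel: "\<rho> *\<^sub>v vec 4 (tensor_fun a b1) = 0\<^sub>v 4"
    and basis: "\<And>i j. i < 2 \<Longrightarrow> j < 2 \<Longrightarrow> cnj (b1 j) * b1 i + cnj (b2 j) * b2 i = (if i = j then 1 else 0)"
    and j: "j < 2" and nonzero: "sesq 4 (tensor_fun a (\<lambda>i. if i = j then 1 else 0)) \<rho> g \<noteq> 0"
  shows "sesq 4 (tensor_fun a b2) \<rho> g \<noteq> 0"
proof -
  have "tensor_fun a (\<lambda>i. if i = j then 1 else 0) k
      = a (k div 2) * (cnj (b1 j) * b1 (k mod 2) + cnj (b2 j) * b2 (k mod 2))" for k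
    using basis[of "k mod 2" j] j by (simp add: tensor_fun_def)
  then have "tensor_fun a (\<lambda>i. if i = j then 1 else 0)
      = (\<lambda>k. cnj (b1 j) * tensor_fun a b1 k + cnj (b2 j) * tensor_fun a b2 k)"
    by (simp add: tensor_fun_def fun_eq_iff algebra_simps)
  then have "sesq 4 (tensor_fun a (\<lambda>i. if i = j then 1 else 0)) \<rho> g = b2 j * sesq 4 (tensor_fun a b2) \<rho> g"
    using sesq_kernel_left[OF herm kernel] by (simp add: sesq_linear_left)
  then show ?thesis using nonzero by auto
qed

section \<open>Responses concentrated at small scale\<close>

lemma measure_level_set_small:
  fixes \<mu> :: "'l measure" and T :: "'l \<Rightarrow> real"
  assumes "prob_space \<mu>" "T \<in> borel_measurable \<mu>" "e > 0"
  obtains \<delta> where "\<delta> > 0" "measure \<mu> {l\<in>space \<mu>. 0 < T l \<and> T l < \<delta>} < e"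
proof -
  interpret prob_space \<mu> by fact
  define S where "S n = {l\<in>space \<mu>. 0 < T l \<and> T l < 1 / Suc n}" for n
  have "S n \<in> sets \<mu>" for n unfolding S_def using assms(2) by measurable
  then have "range S \<subseteq> sets \<mu>" by auto
  moreover have "decseq S"
  proof (rule decseq_SucI)
    fix n
    have "1 / real (Suc (Suc n)) \<le> 1 / real (Suc n)" by (simp add: frac_le)
    then show "S (Suc n) \<subseteq> S n" unfolding S_def by auto
  qed
  moreover have "(\<Inter>n. S n) = {}"
  proof (intro equals0I)
    fix l
    assume l: "l \<in> (\<Inter>n. S n)"
    then have "0 < T l" by (simp add: S_def)
    moreover obtain n :: nat where "1 / T l < n" using reals_Archimedean2 by blast
    then have "1 / T l < Suc n" by simp
    ultimately have "1 / Suc n < T l" by (simp add: field_simps)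
    moreover have "l \<in> S n" using l by blast
    ultimately show False by (simp add: S_def)
  qed
  ultimately have "(\<lambda>n. measure \<mu> (S n)) \<longlonglongrightarrow> 0"
    using finite_Lim_measure_decseq[of S] by simp
  then have "eventually (\<lambda>n. measure \<mu> (S n) < e) sequentially"
    using assms(3) by (rule order_tendstoD(2))
  then obtain n where "measure \<mu> (S n) < e"
    by (auto simp: eventually_sequentially)
  then show ?thesis using that[of "1 / Suc n"] by (simp add: S_def)
qed

lemma sqrt_le_split:
  fixes t a \<delta> :: real
  assumes t: "0 \<le> t" and a: "0 < a" and \<delta>: "0 < \<delta>"
  shows "sqrt t \<le> t / sqrt \<delta> + t / (2 * a) + a / 2 * indicator {0<..<\<delta>} t"
proof (cases "\<delta> \<le> t")
  case True
  then have "sqrt t * sqrt \<delta> \<le> sqrt t * sqrt t" using t by (intro mult_left_mono) auto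
  then have "sqrt t \<le> t / sqrt \<delta>" using t \<delta> by (simp add: field_simps)
  moreover have "0 \<le> t / (2 * a)" "0 \<le> a / 2 * indicator {0<..<\<delta>} t" using t a by simp_all
  ultimately show ?thesis by linarith
next
  case False
  have "2 * a * sqrt t \<le> t + a\<^sup>2"
    using t sum_squares_bound[of "sqrt t" a] by (simp add: power2_eq_square algebra_simps)
  then have "sqrt t \<le> t / (2 * a) + a / 2"
    using a by (simp add: field_simps power2_eq_square)
  moreover have "indicator {0<..<\<delta>} t = (1::real)" if "t \<noteq> 0"
    using that t False by simp
  moreover have "0 \<le> t / sqrt \<delta>" using t \<delta> by simp
  ultimately show ?thesis using a by (cases "t = 0") simp_all
qed

lemma norm_integral_le_sqrt_split:
  fixes \<mu> :: "'l measure" and F :: "'l \<Rightarrow> complex" and P T :: "'l \<Rightarrow> real"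
  assumes "prob_space \<mu>" "T \<in> borel_measurable \<mu>" "integrable \<mu> F" "integrable \<mu> (\<lambda>l. P l * T l)"
    and PTF: "\<And>l. l \<in> space \<mu> \<Longrightarrow> 0 \<le> P l \<and> P l \<le> 1 \<and> 0 \<le> T l \<and> cmod (F l) \<le> P l * sqrt (T l)"
    and "0 < \<delta>" "0 < a"
  shows "cmod (\<integral>l. F l \<partial>\<mu>) \<le> (\<integral>l. P l * T l \<partial>\<mu>) / sqrt \<delta> + (\<integral>l. P l * T l \<partial>\<mu>) / (2 * a)
           + a / 2 * measure \<mu> {l\<in>space \<mu>. 0 < T l \<and> T l < \<delta>}"
proof -
  interpret prob_space \<mu> by fact
  define S where "S = {l\<in>space \<mu>. 0 < T l \<and> T l < \<delta>}"
  have S: "S \<in> sets \<mu>" unfolding S_def using assms(2) by measurable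
  define G where "G l = P l * T l / sqrt \<delta> + P l * T l / (2 * a) + a / 2 * indicator S l" for l
  have "integrable \<mu> (indicator S :: 'l \<Rightarrow> real)"
    using S by (simp add: less_top[symmetric])
  then have G: "integrable \<mu> G"
    unfolding G_def using assms(4) by (intro Bochner_Integration.integrable_add) auto
  have "integral\<^sup>L \<mu> G = (\<integral>l. P l * T l \<partial>\<mu>) / sqrt \<delta> + (\<integral>l. P l * T l \<partial>\<mu>) / (2 * a) + a / 2 * measure \<mu> S"
    unfolding G_def using assms(4) \<open>integrable \<mu> (indicator S)\<close> S
    by (simp add: Bochner_Integration.integral_add Int_absorb2 sets.sets_into_space)
  moreover have "cmod (F l) \<le> G l" if l: "l \<in> space \<mu>" for l
  proof -
    have "cmod (F l) \<le> P l * sqrt (T l)" using PTF[OF l] by blast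
    also have "\<dots> \<le> P l * (T l / sqrt \<delta> + T l / (2 * a) + a / 2 * indicator {0<..<\<delta>} (T l))"
      using PTF[OF l] assms(6,7) by (intro mult_left_mono sqrt_le_split) auto
    also have "\<dots> \<le> G l"
      using PTF[OF l] l assms(7)
      by (auto simp: G_def S_def indicator_def field_simps mult_left_le_one_le)
    finally show ?thesis .
  qed
  then have "cmod (\<integral>l. F l \<partial>\<mu>) \<le> integral\<^sup>L \<mu> G"
    using assms(3) G
    by (intro order_trans[OF integral_norm_bound integral_mono]) auto
  ultimately show ?thesis by (simp add: S_def)
qed

lemma small_scale_response_bound:
  fixes \<mu> :: "'l measure" and T :: "'l \<Rightarrow> real" and C K L :: real
  assumes \<mu>: "prob_space \<mu>" and T: "T \<in> borel_measurable \<mu>" "\<And>l. l \<in> space \<mu> \<Longrightarrow> 0 \<le> T l"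
    and K: "K > 0"
  obtains s where "0 < s" "s < 1"
    "\<And>P F. integrable \<mu> F \<Longrightarrow> integrable \<mu> (\<lambda>l. P l * T l) \<Longrightarrow> (\<integral>l. P l * T l \<partial>\<mu>) = s\<^sup>2 * C \<Longrightarrow>
       (\<And>l. l \<in> space \<mu> \<Longrightarrow> 0 \<le> P l \<and> P l \<le> 1 \<and> cmod (F l) \<le> P l * sqrt (T l)) \<Longrightarrow>
       cmod (\<integral>l. F l \<partial>\<mu>) < s * K - s\<^sup>2 * L"
proof (cases "C < 0")
  case True
  show ?thesis
  proof (rule that[of "1/2"])
    fix P F
    assume "(\<integral>l. P l * T l \<partial>\<mu>) = (1/2)\<^sup>2 * C"
      and "\<And>l. l \<in> space \<mu> \<Longrightarrow> 0 \<le> P l \<and> P l \<le> 1 \<and> cmod (F l) \<le> P l * sqrt (T l)"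
    moreover have "0 \<le> (\<integral>l. P l * T l \<partial>\<mu>)"
      using calculation(2) T(2) by (intro Bochner_Integration.integral_nonneg) auto
    ultimately have "0 \<le> C / 4" by (simp add: power_divide)
    then show "cmod (\<integral>l. F l \<partial>\<mu>) < 1/2 * K - (1/2)\<^sup>2 * L"
      using True by linarith
  qed simp_all
next
  case False
  define \<eta> where "\<eta> = 4 * C / K + 1"
  have \<eta>: "\<eta> > 0" "C / (2 * \<eta>) < K / 8"
    using False K by (auto simp: \<eta>_def field_simps)
  obtain \<delta> where \<delta>: "\<delta> > 0" and m: "measure \<mu> {l\<in>space \<mu>. 0 < T l \<and> T l < \<delta>} < K / (4 * \<eta>)"
    using measure_level_set_small[OF \<mu> T(1), of "K / (4 * \<eta>)"] K \<eta> by auto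
  define m where "m = measure \<mu> {l\<in>space \<mu>. 0 < T l \<and> T l < \<delta>}"
  have "\<eta> * m / 2 < K / 8" using m \<eta> by (simp add: m_def field_simps)
  define D where "D = \<bar>L\<bar> + C / sqrt \<delta> + 1"
  have D: "D > 0" using False \<delta> by (simp add: D_def add_nonneg_pos)
  define s where "s = min (1/2) (K / (4 * D))"
  have s: "0 < s" "s < 1" using K D by (auto simp: s_def)
  have "s \<le> K / (4 * D)" by (simp add: s_def)
  then have "s * D \<le> K / 4" using D by (simp add: pos_le_divide_eq field_simps)
  moreover have "s * D = s * \<bar>L\<bar> + s * (C / sqrt \<delta>) + s" by (simp add: D_def distrib_left)
  moreover have "s * L \<le> s * \<bar>L\<bar>" using s by (intro mult_left_mono) auto
  ultimately have key: "s * (C / sqrt \<delta>) + C / (2 * \<eta>) + \<eta> * m / 2 < K - s * L"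
    using \<eta>(2) \<open>\<eta> * m / 2 < K / 8\<close> s K by linarith
  show ?thesis
  proof (rule that[OF s])
    fix P F
    assume "integrable \<mu> F" "integrable \<mu> (\<lambda>l. P l * T l)" "(\<integral>l. P l * T l \<partial>\<mu>) = s\<^sup>2 * C"
      and PF: "\<And>l. l \<in> space \<mu> \<Longrightarrow> 0 \<le> P l \<and> P l \<le> 1 \<and> cmod (F l) \<le> P l * sqrt (T l)"
    have "cmod (\<integral>l. F l \<partial>\<mu>) \<le> s\<^sup>2 * C / sqrt \<delta> + s\<^sup>2 * C / (2 * (s * \<eta>)) + s * \<eta> / 2 * m"
      using norm_integral_le_sqrt_split[OF \<mu> T(1) \<open>integrable \<mu> F\<close> \<open>integrable \<mu> (\<lambda>l. P l * T l)\<close> _ \<delta>,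
          of "s * \<eta>"] PF T(2) s \<eta> \<open>(\<integral>l. P l * T l \<partial>\<mu>) = s\<^sup>2 * C\<close>
      by (simp add: m_def)
    also have "\<dots> = s * (s * (C / sqrt \<delta>) + C / (2 * \<eta>) + \<eta> * m / 2)"
      using s \<eta> by (simp add: power2_eq_square field_simps)
    also have "\<dots> < s * (K - s * L)"
      using key s by simp
    also have "\<dots> = s * K - s\<^sup>2 * L"
      by (simp add: power2_eq_square algebra_simps)
    finally show "cmod (\<integral>l. F l \<partial>\<mu>) < s * K - s\<^sup>2 * L" .
  qed
qed

lemma norm_first_order_lower_bound:
  fixes s :: real and K L :: complex
  assumes s: "0 < s" "s < 1"
  shows "s * cmod K - s\<^sup>2 * (cmod K + cmod L)
           \<le> cmod (of_real s * (of_real (sqrt (1 - s\<^sup>2)) * K + of_real s * L))"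
proof -
  define c where "c = sqrt (1 - s\<^sup>2)"
  have "s\<^sup>2 \<le> 1" using s by (simp add: power_le_one)
  then have c: "1 - s\<^sup>2 \<le> c"
    unfolding c_def using s \<open>s\<^sup>2 \<le> 1\<close>
    by (intro real_le_rsqrt) (auto simp: power2_eq_square intro!: mult_left_le_one_le)
  have "s * cmod K - s\<^sup>2 * (cmod K + cmod L) \<le> s * ((1 - s\<^sup>2) * cmod K - s * cmod L)"
    using s mult_left_le_one_le[of "cmod K" s] by (simp add: power2_eq_square algebra_simps)
  also have "\<dots> \<le> s * (c * cmod K - s * cmod L)"
    using s c by (intro mult_left_mono diff_right_mono mult_right_mono) auto
  also have "\<dots> \<le> s * cmod (of_real c * K + of_real s * L)"
    using s norm_diff_ineq[of "of_real c * K" "of_real s * L"] c \<open>s\<^sup>2 \<le> 1\<close>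
    by (intro mult_left_mono) (auto simp: norm_mult)
  finally show ?thesis using s by (simp add: c_def norm_mult)
qed

section \<open>Local hidden state models\<close>

lemma LHS_model_response:
  assumes "LHS_model dX dY \<sigma> \<mu> \<tau> p" "proj_meas dX M" "a < length M"
  shows "\<And>l. l \<in> space \<mu> \<Longrightarrow> 0 \<le> p M a l \<and> p M a l \<le> 1"
    and "\<And>i j. i < dY \<Longrightarrow> j < dY \<Longrightarrow> integrable \<mu> (\<lambda>l. of_real (p M a l) * \<tau> l $$ (i,j))
           \<and> \<sigma> M a $$ (i,j) = (\<integral>l. of_real (p M a l) * \<tau> l $$ (i,j) \<partial>\<mu>)"
proof -
  fix l assume "l \<in> space \<mu>"
  then have nonneg: "\<forall>b<length M. 0 \<le> p M b l" and sum: "(\<Sum>b<length M. p M b l) = 1"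
    using assms(1,2) unfolding LHS_model_def by auto
  have "p M a l \<le> (\<Sum>b<length M. p M b l)"
    using nonneg assms(3) by (intro member_le_sum) auto
  then show "0 \<le> p M a l \<and> p M a l \<le> 1" using nonneg assms(3) sum by simp
next
  fix i j assume "i < dY" "j < dY"
  then show "integrable \<mu> (\<lambda>l. of_real (p M a l) * \<tau> l $$ (i,j))
      \<and> \<sigma> M a $$ (i,j) = (\<integral>l. of_real (p M a l) * \<tau> l $$ (i,j) \<partial>\<mu>)"
    using assms unfolding LHS_model_def by blast
qed

lemma borel_measurable_sesq:
  assumes "\<And>i j. i < n \<Longrightarrow> j < n \<Longrightarrow> (\<lambda>l. A l $$ (i,j)) \<in> borel_measurable \<mu>"
  shows "(\<lambda>l. sesq n f (A l) g) \<in> borel_measurable \<mu>"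
  unfolding sesq_def using assms
  by (intro borel_measurable_sum borel_measurable_times borel_measurable_const) auto

lemma sesq_integral:
  fixes \<mu> :: "'l measure" and P :: "'l \<Rightarrow> real"
  assumes "\<And>i j. i < n \<Longrightarrow> j < n \<Longrightarrow> integrable \<mu> (\<lambda>l. of_real (P l) * A l $$ (i,j))
             \<and> S $$ (i,j) = (\<integral>l. of_real (P l) * A l $$ (i,j) \<partial>\<mu>)"
  shows "integrable \<mu> (\<lambda>l. of_real (P l) * sesq n f (A l) g)"
    and "(\<integral>l. of_real (P l) * sesq n f (A l) g \<partial>\<mu>) = sesq n f S g"
proof -
  have eq: "(\<lambda>l. of_real (P l) * sesq n f (A l) g)
      = (\<lambda>l. \<Sum>a<n. \<Sum>b<n. cnj (f a) * (of_real (P l) * A l $$ (a,b)) * g b)"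
    by (simp add: sesq_def sum_distrib_left algebra_simps)
  have int: "integrable \<mu> (\<lambda>l. cnj (f a) * (of_real (P l) * A l $$ (a,b)) * g b)"
    if "a \<in> {..<n}" "b \<in> {..<n}" for a b
    using assms that by simp
  show "integrable \<mu> (\<lambda>l. of_real (P l) * sesq n f (A l) g)"
    unfolding eq using int by (intro Bochner_Integration.integrable_sum) auto
  have "(\<integral>l. of_real (P l) * sesq n f (A l) g \<partial>\<mu>)
      = (\<Sum>a<n. \<integral>l. (\<Sum>b<n. cnj (f a) * (of_real (P l) * A l $$ (a,b)) * g b) \<partial>\<mu>)"
    unfolding eq using int
    by (intro Bochner_Integration.integral_sum Bochner_Integration.integrable_sum) auto
  also have "\<dots> = (\<Sum>a<n. \<Sum>b<n. \<integral>l. cnj (f a) * (of_real (P l) * A l $$ (a,b)) * g b \<partial>\<mu>)"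
    using int by (intro sum.cong refl Bochner_Integration.integral_sum) auto
  also have "\<dots> = sesq n f S g"
    unfolding sesq_def using assms by (intro sum.cong refl) simp
  finally show "(\<integral>l. of_real (P l) * sesq n f (A l) g \<partial>\<mu>) = sesq n f S g" .
qed

lemma no_LHS_model_of_linear_coherence:
  fixes \<sigma> :: "complex mat list \<Rightarrow> nat \<Rightarrow> complex mat" and \<mu> :: "'l measure"
    and x y :: "nat \<Rightarrow> complex" and C K L :: complex
  assumes lhs: "LHS_model 2 2 \<sigma> \<mu> \<tau> p" and K: "K \<noteq> 0"
    and meas: "\<And>s. 0 < s \<Longrightarrow> s < 1 \<Longrightarrow> \<exists>M. proj_meas 2 M \<and> 0 < length M \<and>
        sesq 2 x (\<sigma> M 0) x = of_real (s\<^sup>2) * C \<and>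
        sesq 2 y (\<sigma> M 0) x = of_real s * (of_real (sqrt (1 - s\<^sup>2)) * K + of_real s * L)"
  shows False
proof -
  have \<mu>: "prob_space \<mu>" and dens: "\<And>l. l \<in> space \<mu> \<Longrightarrow> density_mat 2 (\<tau> l)"
    and entries: "\<And>i j. i < 2 \<Longrightarrow> j < 2 \<Longrightarrow> (\<lambda>l. \<tau> l $$ (i,j)) \<in> borel_measurable \<mu>"
    using lhs unfolding LHS_model_def by blast+
  define B where "B = (\<Sum>i<2. cmod (y i))\<^sup>2"
  define T where "T l = B * Re (sesq 2 x (\<tau> l) x)" for l
  have T_meas: "T \<in> borel_measurable \<mu>"
    unfolding T_def using measurable_compose[OF borel_measurable_sesq[OF entries] borel_measurable_Re]
    by (simp add: o_def)
  have T: "0 \<le> T l" "cmod (sesq 2 y (\<tau> l) x) \<le> sqrt (T l)" if "l \<in> space \<mu>" for l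
  proof -
    have "(cmod (sesq 2 y (\<tau> l) x))\<^sup>2 \<le> T l"
      using density_mat_sesq_Cauchy_Schwarz[OF dens[OF that]] by (simp add: T_def B_def)
    then show "0 \<le> T l" "cmod (sesq 2 y (\<tau> l) x) \<le> sqrt (T l)"
      by (auto intro: order_trans[OF zero_le_power2] real_le_rsqrt)
  qed
  have "cmod K > 0" using K by simp
  then obtain s where s: "0 < s" "s < 1" and small:
    "\<And>P F. integrable \<mu> F \<Longrightarrow> integrable \<mu> (\<lambda>l. P l * T l) \<Longrightarrow>
       (\<integral>l. P l * T l \<partial>\<mu>) = s\<^sup>2 * (B * Re C) \<Longrightarrow>
       (\<And>l. l \<in> space \<mu> \<Longrightarrow> 0 \<le> P l \<and> P l \<le> 1 \<and> cmod (F l) \<le> P l * sqrt (T l)) \<Longrightarrow>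
       cmod (\<integral>l. F l \<partial>\<mu>) < s * cmod K - s\<^sup>2 * (cmod K + cmod L)"
    using small_scale_response_bound[OF \<mu> T_meas T(1)] by blast
  obtain M where M: "proj_meas 2 M" "0 < length M" "sesq 2 x (\<sigma> M 0) x = of_real (s\<^sup>2) * C"
      "sesq 2 y (\<sigma> M 0) x = of_real s * (of_real (sqrt (1 - s\<^sup>2)) * K + of_real s * L)"
    using meas[OF s] by blast
  define P where "P = p M 0"
  note P = LHS_model_response[OF lhs M(1,2), folded P_def]
  note xx = sesq_integral[where n = 2 and f = x and g = x, OF P(2)]
  note yx = sesq_integral[where n = 2 and f = y and g = x, OF P(2)]
  have PT: "(\<lambda>l. P l * T l) = (\<lambda>l. B * Re (of_real (P l) * sesq 2 x (\<tau> l) x))"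
    by (simp add: T_def fun_eq_iff)
  have "(\<integral>l. P l * T l \<partial>\<mu>) = B * Re (\<integral>l. of_real (P l) * sesq 2 x (\<tau> l) x \<partial>\<mu>)"
    by (simp only: PT integral_mult_right_zero integral_Re[OF xx(1)])
  then have "(\<integral>l. P l * T l \<partial>\<mu>) = s\<^sup>2 * (B * Re C)"
    using xx(2) M(3) by simp
  moreover have "integrable \<mu> (\<lambda>l. P l * T l)"
    unfolding PT using xx(1) by (intro integrable_mult_right integrable_Re)
  moreover have "cmod (of_real (P l) * sesq 2 y (\<tau> l) x) \<le> P l * sqrt (T l)" if "l \<in> space \<mu>" for l
    using P(1)[OF that] T(2)[OF that] by (simp add: norm_mult mult_left_mono)
  ultimately have "cmod (sesq 2 y (\<sigma> M 0) x) < s * cmod K - s\<^sup>2 * (cmod K + cmod L)"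
    using small[OF yx(1)] P(1) yx(2) by simp
  then show False
    using norm_first_order_lower_bound[OF s, of K L] M(4) by simp
qed

lemma proj_steerable_AB_of_kernel:
  fixes a a' b y :: "nat \<Rightarrow> complex"
  assumes \<rho>: "density_mat 4 \<rho>"
    and a: "(\<Sum>i<2. a i * cnj (a i)) = 1" "(\<Sum>i<2. a' i * cnj (a' i)) = 1" "(\<Sum>i<2. a i * cnj (a' i)) = 0"
    and kernel: "\<rho> *\<^sub>v vec 4 (tensor_fun a b) = 0\<^sub>v 4"
    and K: "sesq 4 (tensor_fun a y) \<rho> (tensor_fun a' b) \<noteq> 0"
  shows "proj_steerable_AB TYPE('l) \<rho>"
  unfolding proj_steerable_AB_def
proof (intro notI, elim exE)
  fix \<mu> :: "'l measure" and \<tau> p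
  assume lhs: "LHS_model 2 2 (assemblage_AB \<rho>) \<mu> \<tau> p"
  have herm: "hermitian_mat 4 \<rho>" using \<rho> by (simp add: density_mat_def psd_mat_def)
  then have carrier: "\<rho> \<in> carrier_mat 4 4" by (simp add: hermitian_mat_def)
  show False
  proof (rule no_LHS_model_of_linear_coherence[OF lhs K, where x = b and y = y])
    fix s :: real assume s: "0 < s" "s < 1"
    define c where "c = sqrt (1 - s\<^sup>2)"
    define u where "u = (\<lambda>i. of_real c * a i + of_real s * a' i)"
    have "proj_meas 2 (rank1_meas 2 u)"
      unfolding u_def c_def
      by (intro proj_meas_rank1_meas unit_combination[OF a] unit_coefficients_sqrt[OF s])
    moreover have "sesq 2 g (assemblage_AB \<rho> (rank1_meas 2 u) 0) b
        = sesq 4 (\<lambda>k. of_real c * tensor_fun a g k + of_real s * tensor_fun a' g k) \<rho>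
            (\<lambda>k. of_real c * tensor_fun a b k + of_real s * tensor_fun a' b k)" for g
      by (simp add: sesq_assemblage_AB[OF carrier] u_def tensor_fun_linear_left)
    ultimately show "\<exists>M. proj_meas 2 M \<and> 0 < length M \<and>
        sesq 2 b (assemblage_AB \<rho> M 0) b = of_real (s\<^sup>2) * sesq 4 (tensor_fun a' b) \<rho> (tensor_fun a' b) \<and>
        sesq 2 y (assemblage_AB \<rho> M 0) b = of_real s * (of_real (sqrt (1 - s\<^sup>2)) * sesq 4 (tensor_fun a y) \<rho> (tensor_fun a' b)
          + of_real s * sesq 4 (tensor_fun a' y) \<rho> (tensor_fun a' b))"
      using sesq_kernel_perturbation[OF herm kernel, where c = c and s = s]
      by (auto simp: rank1_meas_def c_def)
  qed
qed

lemma proj_steerable_BA_of_kernel: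
  fixes a b b' y :: "nat \<Rightarrow> complex"
  assumes \<rho>: "density_mat 4 \<rho>"
    and b: "(\<Sum>i<2. b i * cnj (b i)) = 1" "(\<Sum>i<2. b' i * cnj (b' i)) = 1" "(\<Sum>i<2. b i * cnj (b' i)) = 0"
    and kernel: "\<rho> *\<^sub>v vec 4 (tensor_fun a b) = 0\<^sub>v 4"
    and "sesq 4 (tensor_fun a b') \<rho> (tensor_fun y b) \<noteq> 0"
  shows "proj_steerable_BA TYPE('l) \<rho>"
  unfolding proj_steerable_BA_def
proof (intro notI, elim exE)
  fix \<mu> :: "'l measure" and \<tau> p
  assume lhs: "LHS_model 2 2 (assemblage_BA \<rho>) \<mu> \<tau> p"
  have herm: "hermitian_mat 4 \<rho>" using \<rho> by (simp add: density_mat_def psd_mat_def)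
  then have carrier: "\<rho> \<in> carrier_mat 4 4" by (simp add: hermitian_mat_def)
  have K: "sesq 4 (tensor_fun y b) \<rho> (tensor_fun a b') \<noteq> 0"
    using sesq_hermitian[OF herm, of "tensor_fun y b"] assms(6) by simp
  show False
  proof (rule no_LHS_model_of_linear_coherence[OF lhs K, where x = a and y = y])
    fix s :: real assume s: "0 < s" "s < 1"
    define c where "c = sqrt (1 - s\<^sup>2)"
    define v where "v = (\<lambda>i. of_real c * b i + of_real s * b' i)"
    have "proj_meas 2 (rank1_meas 2 v)"
      unfolding v_def c_def
      by (intro proj_meas_rank1_meas unit_combination[OF b] unit_coefficients_sqrt[OF s])
    moreover have "sesq 2 g (assemblage_BA \<rho> (rank1_meas 2 v) 0) a
        = sesq 4 (\<lambda>k. of_real c * tensor_fun g b k + of_real s * tensor_fun g b' k) \<rho>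
            (\<lambda>k. of_real c * tensor_fun a b k + of_real s * tensor_fun a b' k)" for g
      by (simp add: sesq_assemblage_BA[OF carrier] v_def tensor_fun_linear_right)
    ultimately show "\<exists>M. proj_meas 2 M \<and> 0 < length M \<and>
        sesq 2 a (assemblage_BA \<rho> M 0) a = of_real (s\<^sup>2) * sesq 4 (tensor_fun a b') \<rho> (tensor_fun a b') \<and>
        sesq 2 y (assemblage_BA \<rho> M 0) a = of_real s * (of_real (sqrt (1 - s\<^sup>2)) * sesq 4 (tensor_fun y b) \<rho> (tensor_fun a b')
          + of_real s * sesq 4 (tensor_fun y b') \<rho> (tensor_fun a b'))"
      using sesq_kernel_perturbation[OF herm kernel, where c = c and s = s]
      by (auto simp: rank1_meas_def c_def)
  qed
qed

theorem mainTheorem2: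
  fixes \<rho> :: "complex mat" and \<alpha> \<alpha>\<^sub>p \<beta> :: "complex vec"
  assumes state: "density_mat 4 \<rho>"
    and alpha: "\<alpha> \<in> carrier_vec 2" "\<alpha> \<bullet>c \<alpha> = 1"
    and beta: "\<beta> \<in> carrier_vec 2" "\<beta> \<noteq> 0\<^sub>v 2"
    and kernel: "\<rho> *\<^sub>v tensor_vec \<alpha> \<beta> = 0\<^sub>v 4"
    and alpha_perp: "\<alpha>\<^sub>p \<in> carrier_vec 2" "\<alpha>\<^sub>p \<bullet>c \<alpha>\<^sub>p = 1" "\<alpha>\<^sub>p \<bullet>c \<alpha> = 0"
    and M_beta: "(tensor_mat (bra \<alpha>) (1\<^sub>m 2) * \<rho> * tensor_mat (ket \<alpha>\<^sub>p) (1\<^sub>m 2)) *\<^sub>v \<beta> \<noteq> 0\<^sub>v 2"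
  shows "two_way_proj_steerable TYPE('l) \<rho>"
proof -
  have herm: "hermitian_mat 4 \<rho>" using state by (simp add: density_mat_def psd_mat_def)
  then have carrier: "\<rho> \<in> carrier_mat 4 4" by (simp add: hermitian_mat_def)
  obtain r b1 b2 where r: "r \<noteq> 0" "b1 = (\<lambda>i. r * \<beta> $ i)"
    and b: "(\<Sum>i<2. b1 i * cnj (b1 i)) = 1" "(\<Sum>i<2. b2 i * cnj (b2 i)) = 1" "(\<Sum>i<2. b1 i * cnj (b2 i)) = 0"
    and basis: "\<And>i j. i < 2 \<Longrightarrow> j < 2 \<Longrightarrow> cnj (b1 j) * b1 i + cnj (b2 j) * b2 i = (if i = j then 1 else 0)"
    using qubit_orthonormal_basis[OF beta] by blast
  note a = orthonormal_vec_coords[OF alpha(1) alpha_perp(1) alpha(2) alpha_perp(2,3)]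
  have ker\<beta>: "\<rho> *\<^sub>v vec 4 (tensor_fun (($) \<alpha>) (($) \<beta>)) = 0\<^sub>v 4"
    using kernel alpha(1) beta(1) by (simp add: tensor_vec_eq_vec_tensor_fun)
  then have ker1: "\<rho> *\<^sub>v vec 4 (tensor_fun (($) \<alpha>) b1) = 0\<^sub>v 4"
    using mult_mat_vec_scale_kernel[OF carrier] by (simp add: r(2) tensor_fun_scale_right)
  obtain j where "j < 2"
    "sesq 4 (tensor_fun (($) \<alpha>) (\<lambda>i. if i = j then 1 else 0)) \<rho> (tensor_fun (($) \<alpha>\<^sub>p) (($) \<beta>)) \<noteq> 0"
    by (rule partial_matrix_element_nonzero[OF alpha(1) alpha_perp(1) beta(1) carrier M_beta])
  then have K: "sesq 4 (tensor_fun (($) \<alpha>) b2) \<rho> (tensor_fun (($) \<alpha>\<^sub>p) (($) \<beta>)) \<noteq> 0"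
    using sesq_basis_complement_nonzero[OF herm ker1 basis] by blast
  then have "sesq 4 (tensor_fun (($) \<alpha>) b2) \<rho> (tensor_fun (($) \<alpha>\<^sub>p) b1) \<noteq> 0"
    using r by (simp add: tensor_fun_scale_right sesq_scale_right)
  then show ?thesis
    unfolding two_way_proj_steerable_def
    using proj_steerable_AB_of_kernel[OF state a ker\<beta> K] proj_steerable_BA_of_kernel[OF state b ker1]
    by blast
qed

end
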